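(* Let $n,q$ be positive integers and $f_{n,q}:\mathbb{C}^3\to\mathbb{C}$, $f_{n,q}(x,y,z)=x-3x^{2n+1}y^{2q}+2x^{3n+1}y^{3q}+yz$. Then $f_{n,q}$ satisfies Malgrange's condition for every $t_0\in\mathbb{C}$ if and only if $n\le q$.
   Context: For a polynomial $g:\mathbb{C}^m\to\mathbb{C}$, let $\operatorname{grad} g(x)=\left(\overline{\frac{\partial g}{\partial x_1}(x)},\dots,\overline{\frac{\partial g}{\partial x_m}(x)}\right)$. The polynomial $g$ satisfies Malgrange's condition for $t_0\in\mathbb{C}$ if there is no sequence $(z^k)\subseteq\mathbb{C}^m$ with $\|z^k\|\to\infty$, $g(z^k)\to t_0$ and $\|z^k\|\cdot\|\operatorname{grad} g(z^k)\|\to 0$ (equivalently: there exist $R>0$, $\eta>0$, $\delta>0$ such that $\|x\|\cdot\|\operatorname{grad} g(x)\|\ge\delta$ whenever $\|x\|\ge R$ and $|g(x)-t_0|<\eta$). *)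

theory Defs
  imports "HOL-Analysis.Analysis"
begin

definition cgrad :: "(complex^'m \<Rightarrow> complex) \<Rightarrow> complex^'m \<Rightarrow> complex^'m" where
  "cgrad g x = (\<chi> i. cnj (deriv (\<lambda>t. g (x + t *s axis i 1)) 0))"

definition malgrange_condition :: "(complex^'m \<Rightarrow> complex) \<Rightarrow> complex \<Rightarrow> bool" where
  "malgrange_condition g t0 \<longleftrightarrow>
     \<not> (\<exists>z :: nat \<Rightarrow> complex^'m.
          filterlim (\<lambda>k. norm (z k)) at_top sequentially \<and>
          (\<lambda>k. g (z k)) \<longlonglongrightarrow> t0 \<and>
          (\<lambda>k. norm (z k) * norm (cgrad g (z k))) \<longlonglongrightarrow> 0)"

definition f_nq :: "nat \<Rightarrow> nat \<Rightarrow> complex^3 \<Rightarrow> complex" where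
  "f_nq n q v = (let x = v $ 1; y = v $ 2; z = v $ 3 in
     x - 3 * x ^ (2*n+1) * y ^ (2*q) + 2 * x ^ (3*n+1) * y ^ (3*q) + y * z)"

end

theory Submission
  imports Defs
begin

text \<open>
  With u = x^n y^q one has f = x (1 - u)^2 (1 + 2u) + y z and the z-derivative of f is y.
  If |p| |grad f(p)| tends to 0 while |p| tends to infinity, then y and x y tend to 0; for
  n \<le> q this forces u = (x y)^n y^(q-n) to 0, so the x-derivative
  1 - 3(2n+1) u^2 + 2(3n+1) u^3 tends to 1, a contradiction whatever the limit of f.
  For q < n, take x = a^q, y = a^(-n), z = 0 with a tending to infinity: there u = 1, so f and
  its x- and y-derivatives vanish, while |p| |grad f(p)| \<le> 2 a^q a^(-n) tends to 0.
\<close>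

lemma vec_add_smult_axis_nth [simp]:
  fixes v :: "'a::semiring_1^'n"
  shows "(v + t *s axis i 1) $ j = v $ j + (if j = i then t else 0)"
  by (simp add: axis_def)

lemma cgrad_nth_eqI:
  assumes "((\<lambda>t. g (x + t *s axis i 1)) has_field_derivative D) (at 0)"
  shows "cgrad g x $ i = cnj D"
  using assms unfolding cgrad_def by (simp add: DERIV_imp_deriv)

lemma norm_vec_le_sum_norm_nth:
  "norm (x :: 'a::real_normed_vector^'n) \<le> (\<Sum>i\<in>UNIV. norm (x $ i))"
  unfolding norm_vec_def by (rule L2_set_le_sum) simp

lemma Lim_null_of_mult_at_top:
  fixes b :: "'a \<Rightarrow> 'b::real_normed_vector"
  assumes "filterlim a at_top F" and "((\<lambda>k. a k * norm (b k)) \<longlongrightarrow> 0) F"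
  shows "(b \<longlongrightarrow> 0) F"
proof (rule Lim_null_comparison[OF _ assms(2)])
  have "eventually (\<lambda>k. 1 \<le> a k) F"
    using assms(1) by (simp add: filterlim_at_top)
  then show "eventually (\<lambda>k. norm (b k) \<le> a k * norm (b k)) F"
    by eventually_elim (simp add: mult_le_cancel_right1)
qed

lemma power_mult_monomial:
  fixes x y :: "'a::comm_monoid_mult"
  shows "x ^ (k * n) * y ^ (k * q) = (x ^ n * y ^ q) ^ k"
  by (simp add: power_mult_distrib mult.commute flip: power_mult)

lemma power_Suc_mult_monomial:
  fixes x y :: "'a::comm_monoid_mult"
  shows "x ^ (k * n + 1) * y ^ (k * q) = x * (x ^ n * y ^ q) ^ k"
  by (simp add: mult.assoc flip: power_mult_monomial)

lemma power_mult_monomial_shift: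
  fixes x y :: "'a::comm_monoid_mult"
  assumes "0 < k" and "0 < q"
  shows "x ^ (k * n + 1) * y ^ (k * q - 1)
    = x ^ (n + 1) * y ^ (q - 1) * (x ^ n * y ^ q) ^ (k - 1)"
proof -
  have "k * n + 1 = (n + 1) + (k - 1) * n" and "k * q - 1 = (q - 1) + (k - 1) * q"
    using assms by (simp_all add: algebra_simps)
  then show ?thesis
    by (simp only: power_add mult_ac flip: power_mult_monomial)
qed

definition monomial_nq :: "nat \<Rightarrow> nat \<Rightarrow> complex^3 \<Rightarrow> complex" where
  "monomial_nq n q v = (v $ 1) ^ n * (v $ 2) ^ q"

lemma f_nq_eq:
  "f_nq n q v
    = v $ 1 * (1 - 3 * monomial_nq n q v ^ 2 + 2 * monomial_nq n q v ^ 3) + v $ 2 * v $ 3"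
  unfolding f_nq_def Let_def monomial_nq_def power_Suc_mult_monomial mult.assoc[of _ "_ ^ _"]
  by (simp add: algebra_simps)

lemma cgrad_f_nq_1:
  "cgrad (f_nq n q) v $ 1 = cnj (1 - 3 * of_nat (2*n+1) * monomial_nq n q v ^ 2
     + 2 * of_nat (3*n+1) * monomial_nq n q v ^ 3)"
proof (rule cgrad_nth_eqI)
  have "((\<lambda>t. f_nq n q (v + t *s axis 1 1)) has_field_derivative
      1 - 3 * of_nat (2*n+1) * ((v $ 1) ^ (2*n) * (v $ 2) ^ (2*q))
        + 2 * of_nat (3*n+1) * ((v $ 1) ^ (3*n) * (v $ 2) ^ (3*q))) (at 0)"
    unfolding f_nq_def Let_def vec_add_smult_axis_nth
    by (rule derivative_eq_intros refl | simp add: algebra_simps)+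
  then show "((\<lambda>t. f_nq n q (v + t *s axis 1 1)) has_field_derivative
      1 - 3 * of_nat (2*n+1) * monomial_nq n q v ^ 2
        + 2 * of_nat (3*n+1) * monomial_nq n q v ^ 3) (at 0)"
    unfolding monomial_nq_def power_mult_monomial .
qed

lemma cgrad_f_nq_2:
  "cgrad (f_nq n q) v $ 2 = cnj (6 * of_nat q * (v $ 1) ^ (n+1) * (v $ 2) ^ (q-1)
     * monomial_nq n q v * (monomial_nq n q v - 1) + v $ 3)"
proof (rule cgrad_nth_eqI)
  have "((\<lambda>t. f_nq n q (v + t *s axis 2 1)) has_field_derivative
      - 3 * of_nat (2*q) * (v $ 1) ^ (2*n+1) * (v $ 2) ^ (2*q-1)
        + 2 * of_nat (3*q) * (v $ 1) ^ (3*n+1) * (v $ 2) ^ (3*q-1) + v $ 3) (at 0)"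
    unfolding f_nq_def Let_def vec_add_smult_axis_nth
    by (auto intro!: derivative_eq_intros)
  moreover have "- 3 * of_nat (2*q) * (v $ 1) ^ (2*n+1) * (v $ 2) ^ (2*q-1)
        + 2 * of_nat (3*q) * (v $ 1) ^ (3*n+1) * (v $ 2) ^ (3*q-1) + v $ 3
      = 6 * of_nat q * (v $ 1) ^ (n+1) * (v $ 2) ^ (q-1)
        * monomial_nq n q v * (monomial_nq n q v - 1) + v $ 3"
  proof (cases "q = 0")
    case False
    then have e2: "(v $ 1) ^ (2*n+1) * (v $ 2) ^ (2*q-1)
          = (v $ 1) ^ (n+1) * (v $ 2) ^ (q-1) * monomial_nq n q v"
        and e3: "(v $ 1) ^ (3*n+1) * (v $ 2) ^ (3*q-1)
          = (v $ 1) ^ (n+1) * (v $ 2) ^ (q-1) * monomial_nq n q v ^ 2"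
      using power_mult_monomial_shift[of 2 q "v $ 1" n "v $ 2"]
        power_mult_monomial_shift[of 3 q "v $ 1" n "v $ 2"]
      by (simp_all add: monomial_nq_def)
    show ?thesis
      by (simp only: mult.assoc e2 e3) (simp add: algebra_simps power2_eq_square)
  qed simp
  ultimately show "((\<lambda>t. f_nq n q (v + t *s axis 2 1)) has_field_derivative
      6 * of_nat q * (v $ 1) ^ (n+1) * (v $ 2) ^ (q-1)
     * monomial_nq n q v * (monomial_nq n q v - 1) + v $ 3) (at 0)"
    by simp
qed

lemma cgrad_f_nq_3: "cgrad (f_nq n q) v $ 3 = cnj (v $ 2)"
proof (rule cgrad_nth_eqI)
  show "((\<lambda>t. f_nq n q (v + t *s axis 3 1)) has_field_derivative v $ 2) (at 0)"
    unfolding f_nq_def Let_def vec_add_smult_axis_nth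
    by (auto intro!: derivative_eq_intros)
qed

lemma malgrange_condition_f_nq:
  assumes "0 < n" and "n \<le> q"
  shows "malgrange_condition (f_nq n q) t0"
  unfolding malgrange_condition_def
proof (intro notI, elim exE conjE)
  fix z :: "nat \<Rightarrow> complex^3"
  let ?g = "\<lambda>k. cgrad (f_nq n q) (z k)"
  assume unbounded: "filterlim (\<lambda>k. norm (z k)) at_top sequentially"
    and small: "(\<lambda>k. norm (z k) * norm (?g k)) \<longlonglongrightarrow> 0"
  have grad_0: "?g \<longlonglongrightarrow> 0"
    using unbounded small by (rule Lim_null_of_mult_at_top)
  have y_0: "(\<lambda>k. z k $ 2) \<longlonglongrightarrow> 0"
    using tendsto_cnj[OF tendsto_vec_nth[OF grad_0, of 3]] by (simp add: cgrad_f_nq_3)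
  have "norm (z k $ 1 * z k $ 2) \<le> norm (z k) * norm (?g k)" for k
    using Finite_Cartesian_Product.norm_nth_le[of "z k" 1]
      Finite_Cartesian_Product.norm_nth_le[of "?g k" 3]
    by (simp add: norm_mult mult_mono cgrad_f_nq_3)
  then have xy_0: "(\<lambda>k. z k $ 1 * z k $ 2) \<longlonglongrightarrow> 0"
    by (intro Lim_null_comparison[OF _ small] always_eventually allI)
  have "monomial_nq n q (z k) = (z k $ 1 * z k $ 2) ^ n * (z k $ 2) ^ (q - n)" for k
    using assms(2) by (simp add: monomial_nq_def power_mult_distrib mult.assoc flip: power_add)
  then have "(\<lambda>k. monomial_nq n q (z k)) \<longlonglongrightarrow> 0 ^ n * 0 ^ (q - n)"
    by (simp only:) (intro tendsto_intros xy_0 y_0)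
  then have "(\<lambda>k. monomial_nq n q (z k)) \<longlonglongrightarrow> 0"
    using assms(1) by (metis mult_zero_left zero_power)
  then have "(\<lambda>k. ?g k $ 1)
      \<longlonglongrightarrow> cnj (1 - 3 * of_nat (2*n+1) * 0 ^ 2 + 2 * of_nat (3*n+1) * 0 ^ 3)"
    unfolding cgrad_f_nq_1 by (intro tendsto_intros)
  moreover have "(\<lambda>k. ?g k $ 1) \<longlonglongrightarrow> 0"
    using tendsto_vec_nth[OF grad_0] by simp
  ultimately show False
    using LIMSEQ_unique by fastforce
qed

lemma f_nq_at_unit_monomial:
  assumes "monomial_nq n q v = 1" and "v $ 3 = 0"
  shows "f_nq n q v = 0" and "norm (cgrad (f_nq n q) v) \<le> norm (v $ 2)"
proof -
  show "f_nq n q v = 0"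
    using assms by (simp add: f_nq_eq)
  have "cgrad (f_nq n q) v $ 1 = 0" and "cgrad (f_nq n q) v $ 2 = 0"
    using assms by (simp_all add: cgrad_f_nq_1 cgrad_f_nq_2 algebra_simps)
  then show "norm (cgrad (f_nq n q) v) \<le> norm (v $ 2)"
    using norm_vec_le_sum_norm_nth[of "cgrad (f_nq n q) v"] by (simp add: sum_3 cgrad_f_nq_3)
qed

lemma not_malgrange_condition_f_nq:
  assumes "0 < q" and "q < n"
  shows "\<not> malgrange_condition (f_nq n q) 0"
proof -
  define a where "a k = real (Suc k)" for k
  define z :: "nat \<Rightarrow> complex^3" where
    "z k = vector [of_real (a k ^ q), of_real (inverse (a k ^ n)), 0]" for k
  have a_ge_1: "1 \<le> a k" for k
    by (simp add: a_def)
  have a_at_top: "filterlim a at_top sequentially"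
    unfolding a_def by (rule filterlim_at_top_mono[OF filterlim_real_sequentially]) auto
  have z_3: "z k $ 3 = 0" for k
    by (simp add: z_def)
  have unit: "monomial_nq n q (z k) = 1" for k
    using a_ge_1[of k]
    by (simp add: monomial_nq_def z_def power_inverse mult.commute flip: of_real_power power_mult)
  have norm_z_ge: "a k \<le> norm (z k)" for k
  proof -
    have "a k \<le> a k ^ q"
      using a_ge_1[of k] assms(1) by (simp add: self_le_power)
    also have "\<dots> = norm (z k $ 1)"
      using a_ge_1[of k] by (simp add: z_def norm_power)
    also have "\<dots> \<le> norm (z k)"
      by (rule Finite_Cartesian_Product.norm_nth_le)
    finally show ?thesis .
  qed
  have norm_z_le: "norm (z k) \<le> 2 * a k ^ q" for k
  proof -
    have "norm (z k) \<le> a k ^ q + inverse (a k ^ n)"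
      using norm_vec_le_sum_norm_nth[of "z k"] a_ge_1[of k]
      by (simp add: sum_3 z_def norm_power norm_inverse)
    moreover have "inverse (a k ^ n) \<le> 1" and "1 \<le> a k ^ q"
      using a_ge_1[of k] by (simp_all add: one_le_power inverse_le_1_iff)
    ultimately show ?thesis by linarith
  qed
  have product_le: "norm (z k) * norm (cgrad (f_nq n q) (z k)) \<le> 2 / a k" for k
  proof -
    have grad_le: "norm (cgrad (f_nq n q) (z k)) \<le> inverse (a k ^ n)"
      using f_nq_at_unit_monomial(2)[OF unit z_3, of k] a_ge_1[of k]
      by (simp add: z_def norm_inverse norm_power abs_of_nonneg)
    have "norm (z k) * norm (cgrad (f_nq n q) (z k)) \<le> 2 * a k ^ q * inverse (a k ^ n)"
      by (rule mult_mono[OF norm_z_le grad_le]) (use a_ge_1[of k] in auto)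
    also have "\<dots> \<le> 2 / a k"
    proof -
      have "a k ^ q * a k \<le> a k ^ n"
        using a_ge_1[of k] assms(2) by (metis Suc_leI power_Suc2 power_increasing)
      then show ?thesis
        using a_ge_1[of k] by (simp add: field_simps)
    qed
    finally show ?thesis .
  qed
  have "filterlim (\<lambda>k. norm (z k)) at_top sequentially"
    by (rule filterlim_at_top_mono[OF a_at_top]) (simp add: norm_z_ge)
  moreover have "(\<lambda>k. f_nq n q (z k)) \<longlonglongrightarrow> 0"
    using f_nq_at_unit_monomial(1)[OF unit z_3] by simp
  moreover have "(\<lambda>k. norm (z k) * norm (cgrad (f_nq n q) (z k))) \<longlonglongrightarrow> 0"
  proof (rule Lim_null_comparison)
    show "(\<lambda>k. 2 / a k) \<longlonglongrightarrow> 0"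
      by (rule real_tendsto_divide_at_top[OF tendsto_const a_at_top])
  qed (simp add: product_le)
  ultimately show ?thesis
    unfolding malgrange_condition_def by blast
qed

theorem proposition1p8:
  fixes n q :: nat
  assumes "n > 0" and "q > 0"
  shows "(\<forall>t0. malgrange_condition (f_nq n q) t0) \<longleftrightarrow> n \<le> q"
  using malgrange_condition_f_nq[OF assms(1)] not_malgrange_condition_f_nq[OF assms(2)]
  by (meson not_le)

end
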